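(* For every state $\rho\in\mathsf{St}(S)$, $\mathsf A_w(\rho)\ge \dfrac{\mathsf A_r(\rho)}{d-1}$.
   Context: $S$ is a $d$-dimensional quantum system ($d\ge2$) with non-degenerate Hamiltonian $H=\sum_i E_i|i\rangle\langle i|$, $E_1<\dots<E_d$. $\mathsf{St}(S)$ is the set of density matrices; $\mathsf P(S)$ is the set of passive states, i.e. states $\sum_i p_i|i\rangle\langle i|$ with $p_1\ge\dots\ge p_d$. Activity weight: $\mathsf A_w(\rho)=\min\{t\ge0:\ \rho=t\sigma+(1-t)\tau,\ \sigma\in\mathsf{St}(S),\ \tau\in\mathsf P(S)\}$. Robustness of activity: $\mathsf A_r(\rho)=\min\{t\ge0:\ \exists\sigma\in\mathsf{St}(S),\ (\rho+t\sigma)/(1+t)\in\mathsf P(S)\}$. *)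

theory Defs
  imports "Jordan_Normal_Form.Matrix"
begin

text \<open>Matrices are written in the energy eigenbasis |1>,...,|d> of H (indices 0..d-1),
  ordered so that E_1 < ... < E_d.\<close>

definition mtrace :: "complex mat \<Rightarrow> complex" where
  "mtrace A = (\<Sum>i<dim_row A. A $$ (i,i))"

definition is_state :: "nat \<Rightarrow> complex mat \<Rightarrow> bool" where
  "is_state d \<rho> \<longleftrightarrow> \<rho> \<in> carrier_mat d d
     \<and> (\<forall>i<d. \<forall>j<d. \<rho> $$ (j,i) = cnj (\<rho> $$ (i,j)))
     \<and> (\<forall>v \<in> carrier_vec d. conjugate v \<bullet> (\<rho> *\<^sub>v v) \<in> \<real>
                               \<and> Re (conjugate v \<bullet> (\<rho> *\<^sub>v v)) \<ge> 0)
     \<and> mtrace \<rho> = 1"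

definition is_passive :: "nat \<Rightarrow> complex mat \<Rightarrow> bool" where
  "is_passive d \<tau> \<longleftrightarrow> is_state d \<tau> \<and> diagonal_mat \<tau>
     \<and> (\<forall>i j. i \<le> j \<longrightarrow> j < d \<longrightarrow> Re (\<tau> $$ (j,j)) \<le> Re (\<tau> $$ (i,i)))"

definition activity_weight :: "nat \<Rightarrow> complex mat \<Rightarrow> real" where
  "activity_weight d \<rho> = Inf {t. t \<ge> 0 \<and> (\<exists>\<sigma> \<tau>. is_state d \<sigma> \<and> is_passive d \<tau>
      \<and> \<rho> = complex_of_real t \<cdot>\<^sub>m \<sigma> + complex_of_real (1 - t) \<cdot>\<^sub>m \<tau>)}"

definition activity_robustness :: "nat \<Rightarrow> complex mat \<Rightarrow> real" where
  "activity_robustness d \<rho> = Inf {t. t \<ge> 0 \<and> (\<exists>\<sigma>. is_state d \<sigma>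
      \<and> is_passive d (complex_of_real (1 / (1 + t)) \<cdot>\<^sub>m (\<rho> + complex_of_real t \<cdot>\<^sub>m \<sigma>)))}"

end

theory Submission
  imports Defs
begin

text \<open>Let \<rho> = t\<sigma> + (1 - t)\<tau> with \<tau> passive and t \<le> 1. The complement
  \<sigma>' = (1 - \<sigma>) / (d - 1) is again a state, and \<rho> + (d - 1) t \<sigma>' = t 1 + (1 - t) \<tau> is diagonal
  with non-increasing populations, i.e. passive up to normalisation. Hence
  A_r(\<rho>) \<le> (d - 1) t, and taking the infimum over t gives the claim. That \<sigma>' is positive
  is the operator inequality \<sigma> \<le> 1, which follows from |\<sigma>_ij|^2 \<le> \<sigma>_ii \<sigma>_jj, AM-GM and
  tr \<sigma> = 1.\<close>

lemma cquad_form_eq_double_sum: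
  assumes "A \<in> carrier_mat d d" "v \<in> carrier_vec d"
  shows "conjugate v \<bullet> (A *\<^sub>v v) = (\<Sum>i<d. \<Sum>j<d. cnj (v$i) * A$$(i,j) * v$j)"
  using assms
  by (auto simp: scalar_prod_def mult_mat_vec_def sum_distrib_left mult.assoc atLeast0LessThan
      intro!: sum.cong)

lemma conjugate_unit_vec: "conjugate (unit_vec d i :: complex vec) = unit_vec d i"
  by (rule eq_vecI) (auto simp: unit_vec_def)

lemma cquad_form_unit_vec:
  fixes A :: "complex mat"
  assumes "A \<in> carrier_mat d d" "i < d"
  shows "conjugate (unit_vec d i) \<bullet> (A *\<^sub>v unit_vec d i) = A $$ (i,i)"
proof -
  have "A *\<^sub>v unit_vec d i = col A i"
    by (rule eq_vecI) (use assms in auto)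
  then show ?thesis using assms by (simp add: conjugate_unit_vec)
qed

lemma sum_lessThan_two_point:
  fixes f :: "nat \<Rightarrow> 'a::comm_monoid_add"
  assumes "k < d" "l < d" "k \<noteq> l" "\<And>m. m \<noteq> k \<Longrightarrow> m \<noteq> l \<Longrightarrow> f m = 0"
  shows "(\<Sum>m<d. f m) = f k + f l"
proof -
  have "(\<Sum>m<d. f m) = (\<Sum>m\<in>{k,l}. f m)"
    by (rule sum.mono_neutral_right) (use assms in auto)
  then show ?thesis using assms(3) by simp
qed

lemma cquad_form_two_point:
  assumes A: "A \<in> carrier_mat d d" and k: "k < d" and l: "l < d" and kl: "k \<noteq> l"
    and v: "v = vec d (\<lambda>m. if m = k then x else if m = l then y else 0)"
  shows "conjugate v \<bullet> (A *\<^sub>v v)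
    = cnj x * A$$(k,k) * x + cnj x * A$$(k,l) * y + cnj y * A$$(l,k) * x + cnj y * A$$(l,l) * y"
proof -
  define g where "g = (\<lambda>m::nat. if m = k then x else if m = l then y else 0)"
  have "conjugate v \<bullet> (A *\<^sub>v v) = (\<Sum>i<d. \<Sum>j<d. cnj (g i) * A$$(i,j) * g j)"
    using cquad_form_eq_double_sum[OF A, of v] by (simp add: v g_def)
  also have "\<dots> = (\<Sum>i<d. cnj (g i) * A$$(i,k) * g k + cnj (g i) * A$$(i,l) * g l)"
    by (intro sum.cong refl sum_lessThan_two_point[OF k l kl]) (simp add: g_def)
  also have "\<dots> = (cnj (g k) * A$$(k,k) * g k + cnj (g k) * A$$(k,l) * g l)
      + (cnj (g l) * A$$(l,k) * g k + cnj (g l) * A$$(l,l) * g l)"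
    by (rule sum_lessThan_two_point[OF k l kl]) (simp add: g_def)
  finally show ?thesis using kl by (simp add: g_def)
qed

lemma cnj_mult_self: "cnj z * z = complex_of_real ((cmod z)^2)"
  by (metis complex_norm_square mult.commute)

lemma smult_mat_mult_vec:
  assumes "A \<in> carrier_mat nr nc" "v \<in> carrier_vec nc"
  shows "(k \<cdot>\<^sub>m A) *\<^sub>v v = k \<cdot>\<^sub>v (A *\<^sub>v v)"
  using assms
  by (intro eq_vecI) (auto simp: scalar_prod_def sum_distrib_left mult.assoc intro!: sum.cong)

lemma conjugate_scalar_prod_self:
  assumes "v \<in> carrier_vec d"
  shows "conjugate v \<bullet> v = complex_of_real (\<Sum>i<d. (cmod (v$i))^2)"
proof -
  have "conjugate v \<bullet> v = (\<Sum>i<d. cnj (v$i) * v$i)"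
    using assms by (simp add: scalar_prod_def atLeast0LessThan)
  also have "\<dots> = complex_of_real (\<Sum>i<d. (cmod (v$i))^2)"
    by (simp only: cnj_mult_self of_real_sum)
  finally show ?thesis .
qed

lemma cquad_form_one_minus:
  fixes A :: "complex mat"
  assumes A: "A \<in> carrier_mat d d" and v: "v \<in> carrier_vec d"
  shows "conjugate v \<bullet> ((1\<^sub>m d - A) *\<^sub>v v)
    = complex_of_real (\<Sum>i<d. (cmod (v$i))^2) - conjugate v \<bullet> (A *\<^sub>v v)"
proof -
  have "(1\<^sub>m d - A) *\<^sub>v v = v - A *\<^sub>v v"
    using minus_mult_distrib_mat_vec[OF one_carrier_mat A v] v by simp
  then show ?thesis
    using A v by (simp add: scalar_prod_minus_distrib[of _ d] conjugate_scalar_prod_self)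
qed

lemma cquad_form_diagonal:
  assumes A: "A \<in> carrier_mat d d" and dg: "diagonal_mat A" and v: "v \<in> carrier_vec d"
  shows "conjugate v \<bullet> (A *\<^sub>v v) = (\<Sum>i<d. A$$(i,i) * (cnj (v$i) * v$i))"
proof -
  have "conjugate v \<bullet> (A *\<^sub>v v) = (\<Sum>i<d. (A *\<^sub>v v) $ i * cnj (v$i))"
    using A v by (simp add: scalar_prod_def atLeast0LessThan mult.commute)
  also have "\<dots> = (\<Sum>i<d. A$$(i,i) * (cnj (v$i) * v$i))"
  proof (rule sum.cong)
    fix i assume "i \<in> {..<d}"
    then have i: "i < d" by simp
    have "(A *\<^sub>v v) $ i = (\<Sum>j<d. A$$(i,j) * v$j)"
      using A v i by (simp add: scalar_prod_def atLeast0LessThan)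
    also have "\<dots> = (\<Sum>j\<in>{i}. A$$(i,j) * v$j)"
      by (rule sum.mono_neutral_right) (use i A dg in \<open>auto simp: diagonal_mat_def\<close>)
    finally show "(A *\<^sub>v v) $ i * cnj (v$i) = A$$(i,i) * (cnj (v$i) * v$i)"
      by (simp add: mult_ac)
  qed simp
  finally show ?thesis .
qed

text \<open>The test vectors (B, -cnj c), (-c, A) and (1, -cnj c) cover the cases B > 0, A > 0 and
  A = B = 0 respectively.\<close>

lemma hermitian_2x2_psd_offdiag_bound:
  fixes a b c :: complex
  assumes "Im a = 0" "Im b = 0"
    and psd: "\<And>x y. 0 \<le> Re (cnj x * a * x + cnj x * c * y + cnj y * cnj c * x + cnj y * b * y)"
  shows "(cmod c)^2 \<le> Re a * Re b"
proof -
  obtain p q where c: "c = Complex p q" by (cases c)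
  have a: "a = complex_of_real (Re a)" and b: "b = complex_of_real (Re b)"
    using assms(1,2) by (simp_all add: complex_eq_iff)
  define A B where "A = Re a" and "B = Re b"
  have "0 \<le> A" using psd[of 1 0] by (simp add: A_def)
  moreover have "0 \<le> B" using psd[of 0 1] by (simp add: B_def)
  moreover have "0 \<le> B * (A*B - (p^2+q^2))" using psd[of "complex_of_real B" "- cnj c"]
    by (subst (asm) a, subst (asm) b) (simp add: c A_def B_def algebra_simps power2_eq_square)
  moreover have "0 \<le> A * (A*B - (p^2+q^2))" using psd[of "- c" "complex_of_real A"]
    by (subst (asm) a, subst (asm) b) (simp add: c A_def B_def algebra_simps power2_eq_square)
  moreover have "0 \<le> A + B*(p^2+q^2) - 2*(p^2+q^2)" using psd[of 1 "- cnj c"]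
    by (subst (asm) a, subst (asm) b) (simp add: c A_def B_def algebra_simps power2_eq_square)
  ultimately have "p^2+q^2 \<le> A*B"
    by (cases "B > 0"; cases "A > 0") (auto simp: zero_le_mult_iff)
  then show ?thesis by (simp add: c cmod_def A_def B_def)
qed

lemma state_carrier: "is_state d \<sigma> \<Longrightarrow> \<sigma> \<in> carrier_mat d d"
  unfolding is_state_def by blast

lemma state_dim_pos:
  assumes "is_state d \<sigma>"
  shows "0 < d"
proof -
  have "dim_row \<sigma> = d" using state_carrier[OF assms] by simp
  moreover have "mtrace \<sigma> = 1" using assms unfolding is_state_def by blast
  ultimately show ?thesis by (cases "d = 0") (auto simp: mtrace_def)
qed

lemma state_diag_real:
  assumes "is_state d \<sigma>" "i < d"
  shows "\<sigma> $$ (i,i) = complex_of_real (Re (\<sigma> $$ (i,i)))"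
proof -
  have "\<sigma> $$ (i,i) = cnj (\<sigma> $$ (i,i))" using assms unfolding is_state_def by blast
  then have "Im (\<sigma> $$ (i,i)) = Im (cnj (\<sigma> $$ (i,i)))" by (rule arg_cong)
  then have "Im (\<sigma> $$ (i,i)) = 0" by simp
  then show ?thesis by (simp add: complex_eq_iff)
qed

lemma state_diag_nonneg:
  assumes "is_state d \<sigma>" "i < d"
  shows "0 \<le> Re (\<sigma> $$ (i,i))"
proof -
  have "0 \<le> Re (conjugate (unit_vec d i) \<bullet> (\<sigma> *\<^sub>v unit_vec d i))"
    using assms(1) unit_vec_carrier unfolding is_state_def by blast
  then show ?thesis using cquad_form_unit_vec[OF state_carrier[OF assms(1)] assms(2)] by simp
qed

lemma state_diag_sum:
  assumes "is_state d \<sigma>"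
  shows "(\<Sum>i<d. Re (\<sigma> $$ (i,i))) = 1"
proof -
  have "(\<Sum>i<d. Re (\<sigma> $$ (i,i))) = Re (mtrace \<sigma>)"
    using state_carrier[OF assms] by (simp add: mtrace_def)
  moreover have "mtrace \<sigma> = 1" using assms unfolding is_state_def by blast
  ultimately show ?thesis by simp
qed

lemma state_entry_norm_sq_le:
  assumes st: "is_state d \<sigma>" and i: "i < d" and j: "j < d"
  shows "(cmod (\<sigma> $$ (i,j)))^2 \<le> Re (\<sigma> $$ (i,i)) * Re (\<sigma> $$ (j,j))"
proof (cases "i = j")
  case True
  have "cmod (\<sigma> $$ (i,i)) = Re (\<sigma> $$ (i,i))"
    using state_diag_real[OF st i] state_diag_nonneg[OF st i] by (metis abs_of_nonneg norm_of_real)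
  then show ?thesis using True by (simp add: power2_eq_square)
next
  case False
  have car: "\<sigma> \<in> carrier_mat d d" using st by (rule state_carrier)
  show ?thesis
  proof (rule hermitian_2x2_psd_offdiag_bound)
    show "Im (\<sigma> $$ (i,i)) = 0" "Im (\<sigma> $$ (j,j)) = 0"
      using state_diag_real[OF st i] state_diag_real[OF st j] by (metis Im_complex_of_real)+
  next
    fix x y :: complex
    let ?v = "vec d (\<lambda>m. if m = i then x else if m = j then y else 0)"
    have "0 \<le> Re (conjugate ?v \<bullet> (\<sigma> *\<^sub>v ?v))" using st unfolding is_state_def by simp
    moreover have "\<sigma> $$ (j,i) = cnj (\<sigma> $$ (i,j))" using st i j unfolding is_state_def by blast
    ultimately show "0 \<le> Re (cnj x * \<sigma>$$(i,i) * x + cnj x * \<sigma>$$(i,j) * y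
        + cnj y * cnj (\<sigma>$$(i,j)) * x + cnj y * \<sigma>$$(j,j) * y)"
      using cquad_form_two_point[OF car i j False refl] by simp
  qed
qed

lemma le_arith_mean_if_sq_le_mult:
  fixes z X Y :: real
  assumes "0 \<le> X" "0 \<le> Y" "z^2 \<le> X*Y"
  shows "z \<le> (X+Y)/2"
proof -
  have "X*Y \<le> ((X+Y)/2)^2"
    using sum_squares_ge_zero[of "(X-Y)/2" 0] by (simp add: power2_eq_square field_simps)
  then have "z^2 \<le> ((X+Y)/2)^2" using assms(3) by linarith
  then show ?thesis using assms(1,2) power2_le_imp_le[of z "(X+Y)/2"] abs_le_D1 by simp
qed

text \<open>By AM-GM, |\<sigma>_ij||v_i||v_j| \<le> (|v_i|^2 \<sigma>_jj + |v_j|^2 \<sigma>_ii)/2; summing over i, j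
  gives \<Sum>_i |v_i|^2 \<cdot> tr \<sigma>.\<close>

lemma state_cquad_form_le_norm_sq:
  assumes st: "is_state d \<sigma>" and v: "v \<in> carrier_vec d"
  shows "Re (conjugate v \<bullet> (\<sigma> *\<^sub>v v)) \<le> (\<Sum>i<d. (cmod (v$i))^2)"
proof -
  define a where "a = (\<lambda>i. Re (\<sigma>$$(i,i)))"
  define n where "n = (\<lambda>i. (cmod (v$i))^2)"
  have "Re (conjugate v \<bullet> (\<sigma> *\<^sub>v v)) = (\<Sum>i<d. \<Sum>j<d. Re (cnj (v$i) * \<sigma>$$(i,j) * v$j))"
    by (simp add: cquad_form_eq_double_sum[OF state_carrier[OF st] v])
  also have "\<dots> \<le> (\<Sum>i<d. \<Sum>j<d. cmod (v$i) * cmod (\<sigma>$$(i,j)) * cmod (v$j))"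
    by (intro sum_mono) (metis complex_Re_le_cmod complex_mod_cnj norm_mult)
  also have "\<dots> \<le> (\<Sum>i<d. \<Sum>j<d. (n i * a j + n j * a i) / 2)"
  proof (intro sum_mono)
    fix i j assume "i \<in> {..<d}" "j \<in> {..<d}"
    then have i: "i < d" and j: "j < d" by auto
    have "(cmod (v$i) * cmod (\<sigma>$$(i,j)) * cmod (v$j))^2
        = n i * (cmod (\<sigma>$$(i,j)))^2 * n j"
      by (simp add: n_def power_mult_distrib)
    also have "\<dots> \<le> n i * (a i * a j) * n j"
      using state_entry_norm_sq_le[OF st i j]
      by (intro mult_right_mono mult_left_mono) (auto simp: a_def n_def)
    finally show "cmod (v$i) * cmod (\<sigma>$$(i,j)) * cmod (v$j) \<le> (n i * a j + n j * a i) / 2"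
      using state_diag_nonneg[OF st i] state_diag_nonneg[OF st j]
      by (intro le_arith_mean_if_sq_le_mult) (auto simp: a_def n_def mult_ac)
  qed
  also have "\<dots> = (\<Sum>i<d. n i) * (\<Sum>j<d. a j)"
  proof -
    have "(\<Sum>i<d. \<Sum>j<d. n j * a i) = (\<Sum>i<d. \<Sum>j<d. n i * a j)"
      by (rule sum.swap)
    moreover have "(\<Sum>i<d. \<Sum>j<d. (n i * a j + n j * a i) / 2)
        = ((\<Sum>i<d. \<Sum>j<d. n i * a j) + (\<Sum>i<d. \<Sum>j<d. n j * a i)) / 2"
      by (simp add: sum.distrib sum_divide_distrib add_divide_distrib)
    ultimately show ?thesis by (simp add: sum_product)
  qed
  finally show ?thesis using state_diag_sum[OF st] by (simp add: a_def n_def)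
qed

lemma is_passive_diagI:
  fixes M :: "complex mat" and r :: "nat \<Rightarrow> real"
  assumes car: "M \<in> carrier_mat d d"
    and off: "\<And>i j. i < d \<Longrightarrow> j < d \<Longrightarrow> i \<noteq> j \<Longrightarrow> M $$ (i,j) = 0"
    and dg: "\<And>i. i < d \<Longrightarrow> M $$ (i,i) = complex_of_real (r i)"
    and nn: "\<And>i. i < d \<Longrightarrow> 0 \<le> r i"
    and dec: "\<And>i j. i \<le> j \<Longrightarrow> j < d \<Longrightarrow> r j \<le> r i"
    and sum: "(\<Sum>i<d. r i) = 1"
  shows "is_passive d M"
proof -
  have herm: "\<forall>i<d. \<forall>j<d. M $$ (j,i) = cnj (M $$ (i,j))"
  proof (intro allI impI)
    fix i j assume "i < d" "j < d"
    then show "M $$ (j,i) = cnj (M $$ (i,j))" by (cases "i = j") (simp_all add: dg off)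
  qed
  have diag: "diagonal_mat M" using car off by (auto simp: diagonal_mat_def)
  have psd: "conjugate v \<bullet> (M *\<^sub>v v) \<in> \<real> \<and> 0 \<le> Re (conjugate v \<bullet> (M *\<^sub>v v))"
    if v: "v \<in> carrier_vec d" for v
  proof -
    have "conjugate v \<bullet> (M *\<^sub>v v) = complex_of_real (\<Sum>i<d. r i * (cmod (v$i))^2)"
      unfolding cquad_form_diagonal[OF car diag v] of_real_sum
      by (intro sum.cong refl) (simp add: dg cnj_mult_self)
    moreover have "0 \<le> (\<Sum>i<d. r i * (cmod (v$i))^2)" by (intro sum_nonneg) (simp add: nn)
    ultimately show ?thesis by simp
  qed
  have "mtrace M = (\<Sum>i<d. complex_of_real (r i))" using car by (simp add: mtrace_def dg)
  also have "\<dots> = 1" using sum by (metis of_real_1 of_real_sum)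
  finally have "is_state d M" unfolding is_state_def using car herm psd by blast
  moreover note diag
  moreover have "\<forall>i j. i \<le> j \<longrightarrow> j < d \<longrightarrow> Re (M $$ (j,j)) \<le> Re (M $$ (i,i))"
    using dg dec by (metis Re_complex_of_real order.strict_trans1)
  ultimately show ?thesis unfolding is_passive_def by blast
qed

lemma complement_state_is_state:
  assumes d2: "2 \<le> d" and st: "is_state d \<sigma>"
  shows "is_state d (complex_of_real (1 / (real d - 1)) \<cdot>\<^sub>m (1\<^sub>m d - \<sigma>))"
proof -
  define c where "c = 1 / (real d - 1)"
  let ?M = "complex_of_real c \<cdot>\<^sub>m (1\<^sub>m d - \<sigma>)"
  have c: "0 < c" "c * (real d - 1) = 1" using d2 by (auto simp: c_def)
  have car: "\<sigma> \<in> carrier_mat d d" using st by (rule state_carrier)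
  have herm: "\<And>i j. i < d \<Longrightarrow> j < d \<Longrightarrow> \<sigma> $$ (j,i) = cnj (\<sigma> $$ (i,j))"
    using st unfolding is_state_def by blast
  have carM: "?M \<in> carrier_mat d d" using car by (intro smult_carrier_mat minus_carrier_mat)
  have ent: "?M $$ (i,j) = complex_of_real c * ((if i = j then 1 else 0) - \<sigma>$$(i,j))"
    if "i < d" "j < d" for i j
    using that car by simp
  have form: "conjugate v \<bullet> (?M *\<^sub>v v) = complex_of_real c
      * (complex_of_real (\<Sum>i<d. (cmod (v$i))^2) - conjugate v \<bullet> (\<sigma> *\<^sub>v v))"
    if v: "v \<in> carrier_vec d" for v
  proof -
    have "1\<^sub>m d - \<sigma> \<in> carrier_mat d d" using car by (rule minus_carrier_mat)
    then show ?thesis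
      using car v by (simp add: smult_mat_mult_vec cquad_form_one_minus[OF car v])
  qed
  have "conjugate v \<bullet> (?M *\<^sub>v v) \<in> \<real> \<and> 0 \<le> Re (conjugate v \<bullet> (?M *\<^sub>v v))"
    if v: "v \<in> carrier_vec d" for v
  proof -
    have "conjugate v \<bullet> (\<sigma> *\<^sub>v v) \<in> \<real>" using st v unfolding is_state_def by blast
    moreover have "Re (conjugate v \<bullet> (\<sigma> *\<^sub>v v)) \<le> (\<Sum>i<d. (cmod (v$i))^2)"
      by (rule state_cquad_form_le_norm_sq[OF st v])
    ultimately show ?thesis
      unfolding form[OF v] using c(1)
      by (simp add: Reals_mult Reals_diff)
  qed
  moreover have "mtrace ?M = 1"
  proof -
    have "mtrace \<sigma> = 1" using st unfolding is_state_def by blast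
    have "mtrace ?M = complex_of_real c * (of_nat d - mtrace \<sigma>)"
      using car by (simp add: mtrace_def ent sum_subtractf sum_distrib_left[symmetric])
    also have "\<dots> = complex_of_real (c * (real d - 1))"
      using \<open>mtrace \<sigma> = 1\<close> by simp
    finally show ?thesis using c(2) by simp
  qed
  moreover have "\<forall>i<d. \<forall>j<d. ?M $$ (j,i) = cnj (?M $$ (i,j))"
  proof (intro allI impI)
    fix i j assume ij: "i < d" "j < d"
    show "?M $$ (j,i) = cnj (?M $$ (i,j))"
      unfolding ent[OF ij] ent[OF ij(2,1)] herm[OF ij] by simp
  qed
  ultimately have "is_state d ?M" unfolding is_state_def using carM by blast
  then show ?thesis by (simp only: c_def)
qed

lemma passive_mix_with_identity:
  assumes tp: "is_passive d \<tau>" and t0: "0 \<le> t" and t1: "t \<le> 1"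
  shows "is_passive d (complex_of_real (1 / (1 + (real d - 1) * t))
    \<cdot>\<^sub>m (complex_of_real t \<cdot>\<^sub>m 1\<^sub>m d + complex_of_real (1 - t) \<cdot>\<^sub>m \<tau>))"
    (is "is_passive d ?M")
proof -
  define s where "s = 1 / (1 + (real d - 1) * t)"
  have st: "is_state d \<tau>" and dg: "diagonal_mat \<tau>"
    and dec: "\<And>i j. i \<le> j \<Longrightarrow> j < d \<Longrightarrow> Re (\<tau> $$ (j,j)) \<le> Re (\<tau> $$ (i,i))"
    using tp unfolding is_passive_def by blast+
  have car: "\<tau> \<in> carrier_mat d d" using st by (rule state_carrier)
  have "0 < 1 + (real d - 1) * t"
    using state_dim_pos[OF st] t0 by (simp add: add_pos_nonneg)
  then have s: "0 < s" "s * (1 + (real d - 1) * t) = 1" by (simp_all add: s_def)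
  have ent: "?M $$ (i,j) = complex_of_real s
      * (complex_of_real t * (if i = j then 1 else 0) + complex_of_real (1 - t) * \<tau>$$(i,j))"
    if "i < d" "j < d" for i j
    using that car by (simp add: s_def)
  show ?thesis
  proof (rule is_passive_diagI[where r = "\<lambda>i. s * (t + (1 - t) * Re (\<tau>$$(i,i)))"])
    show "?M \<in> carrier_mat d d" using car by simp
  next
    fix i j assume "i < d" "j < d" "i \<noteq> j"
    then show "?M $$ (i,j) = 0" using dg car by (simp add: ent diagonal_mat_def)
  next
    fix i assume i: "i < d"
    then show "?M $$ (i,i) = complex_of_real (s * (t + (1 - t) * Re (\<tau>$$(i,i))))"
      unfolding ent[OF i i] by (subst state_diag_real[OF st i]) simp
    show "0 \<le> s * (t + (1 - t) * Re (\<tau>$$(i,i)))"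
      using s(1) t0 t1 state_diag_nonneg[OF st i] by simp
  next
    fix i j assume "i \<le> j" "j < d"
    then show "s * (t + (1 - t) * Re (\<tau>$$(j,j))) \<le> s * (t + (1 - t) * Re (\<tau>$$(i,i)))"
      using dec s(1) t1 by (simp add: mult_left_mono)
  next
    have "(\<Sum>i<d. s * (t + (1 - t) * Re (\<tau>$$(i,i))))
        = s * (real d * t + (1 - t) * (\<Sum>i<d. Re (\<tau>$$(i,i))))"
      by (simp add: sum.distrib sum_distrib_left[symmetric])
    then show "(\<Sum>i<d. s * (t + (1 - t) * Re (\<tau>$$(i,i)))) = 1"
      using s(2) state_diag_sum[OF st] by (simp add: algebra_simps)
  qed
qed

lemma maximally_mixed_passive:
  assumes "0 < d"
  shows "is_passive d (complex_of_real (1 / real d) \<cdot>\<^sub>m 1\<^sub>m d)"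
  by (rule is_passive_diagI[where r = "\<lambda>_. 1 / real d"]) (use assms in auto)

lemma activity_robustness_le_mixing_weight:
  assumes d2: "2 \<le> d" and \<sigma>: "is_state d \<sigma>" and \<tau>: "is_passive d \<tau>"
    and t0: "0 \<le> t" and t1: "t \<le> 1"
    and \<rho>: "\<rho> = complex_of_real t \<cdot>\<^sub>m \<sigma> + complex_of_real (1 - t) \<cdot>\<^sub>m \<tau>"
  shows "activity_robustness d \<rho> \<le> (real d - 1) * t"
proof -
  define \<sigma>' where "\<sigma>' = complex_of_real (1 / (real d - 1)) \<cdot>\<^sub>m (1\<^sub>m d - \<sigma>)"
  have carS: "\<sigma> \<in> carrier_mat d d" using \<sigma> by (rule state_carrier)
  have carT: "\<tau> \<in> carrier_mat d d" using \<tau> unfolding is_passive_def by (blast intro: state_carrier)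
  have scale: "complex_of_real ((real d - 1) * t) * complex_of_real (1 / (real d - 1)) = complex_of_real t"
  proof -
    have "(real d - 1) * t * (1 / (real d - 1)) = t" using d2 by simp
    then show ?thesis by (metis of_real_mult)
  qed
  have mix: "\<rho> + complex_of_real ((real d - 1) * t) \<cdot>\<^sub>m \<sigma>'
      = complex_of_real t \<cdot>\<^sub>m 1\<^sub>m d + complex_of_real (1 - t) \<cdot>\<^sub>m \<tau>"
  proof (rule eq_matI)
    fix i j assume "i < dim_row (complex_of_real t \<cdot>\<^sub>m 1\<^sub>m d + complex_of_real (1 - t) \<cdot>\<^sub>m \<tau>)"
      "j < dim_col (complex_of_real t \<cdot>\<^sub>m 1\<^sub>m d + complex_of_real (1 - t) \<cdot>\<^sub>m \<tau>)"
    then have ij: "i < d" "j < d" using carT by auto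
    have "(\<rho> + complex_of_real ((real d - 1) * t) \<cdot>\<^sub>m \<sigma>') $$ (i,j)
       = complex_of_real t * \<sigma>$$(i,j) + complex_of_real (1 - t) * \<tau>$$(i,j)
         + (complex_of_real ((real d - 1) * t) * complex_of_real (1 / (real d - 1)))
           * ((if i = j then 1 else 0) - \<sigma>$$(i,j))"
      using ij carS carT unfolding \<rho> \<sigma>'_def by (simp del: of_real_mult of_real_divide)
    also have "\<dots> = complex_of_real t * (if i = j then 1 else 0) + complex_of_real (1 - t) * \<tau>$$(i,j)"
      unfolding scale by (simp add: algebra_simps)
    finally show "(\<rho> + complex_of_real ((real d - 1) * t) \<cdot>\<^sub>m \<sigma>') $$ (i,j)
        = (complex_of_real t \<cdot>\<^sub>m 1\<^sub>m d + complex_of_real (1 - t) \<cdot>\<^sub>m \<tau>) $$ (i,j)"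
      using ij carT by simp
  qed (use carS carT in \<open>simp_all add: \<rho> \<sigma>'_def\<close>)
  have "is_state d \<sigma>'
      \<and> is_passive d (complex_of_real (1 / (1 + (real d - 1) * t))
          \<cdot>\<^sub>m (\<rho> + complex_of_real ((real d - 1) * t) \<cdot>\<^sub>m \<sigma>'))"
    unfolding mix using complement_state_is_state[OF d2 \<sigma>] passive_mix_with_identity[OF \<tau> t0 t1]
    by (simp add: \<sigma>'_def)
  then show ?thesis
    unfolding activity_robustness_def using d2 t0
    by (intro cInf_lower) (auto intro: bdd_belowI[of _ 0])
qed

theorem mainTheorem10:
  fixes d :: nat and \<rho> :: "complex mat"
  assumes "d \<ge> 2" and "is_state d \<rho>"
  shows "activity_weight d \<rho> \<ge> activity_robustness d \<rho> / (real d - 1)"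
proof -
  let ?W = "{t. t \<ge> 0 \<and> (\<exists>\<sigma> \<tau>. is_state d \<sigma> \<and> is_passive d \<tau>
      \<and> \<rho> = complex_of_real t \<cdot>\<^sub>m \<sigma> + complex_of_real (1 - t) \<cdot>\<^sub>m \<tau>)}"
  let ?\<tau>\<^sub>0 = "complex_of_real (1 / real d) \<cdot>\<^sub>m 1\<^sub>m d"
  have \<tau>\<^sub>0: "is_passive d ?\<tau>\<^sub>0" using assms(1) by (intro maximally_mixed_passive) simp
  have trivial: "\<rho> = complex_of_real 1 \<cdot>\<^sub>m \<rho> + complex_of_real (1 - 1) \<cdot>\<^sub>m ?\<tau>\<^sub>0"
    using state_carrier[OF assms(2)] by (intro eq_matI) auto
  have "activity_robustness d \<rho> / (real d - 1) \<le> t" if t: "t \<in> ?W" for t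
  proof -
    obtain \<sigma> \<tau> where t0: "0 \<le> t" and \<sigma>: "is_state d \<sigma>" and \<tau>: "is_passive d \<tau>"
      and \<rho>: "\<rho> = complex_of_real t \<cdot>\<^sub>m \<sigma> + complex_of_real (1 - t) \<cdot>\<^sub>m \<tau>"
      using t by blast
    \<comment> \<open>The definition of the activity weight admits t > 1; such t are beaten by t = 1.\<close>
    have "activity_robustness d \<rho> \<le> (real d - 1) * min t 1"
      using activity_robustness_le_mixing_weight[OF assms(1) \<sigma> \<tau> t0 _ \<rho>]
        activity_robustness_le_mixing_weight[OF assms(1,2) \<tau>\<^sub>0 _ _ trivial]
      by (cases "t \<le> 1") simp_all
    also have "\<dots> \<le> (real d - 1) * t" using assms(1) by (intro mult_left_mono) auto
    finally show ?thesis using assms(1) by (simp add: divide_le_eq mult.commute)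
  qed
  moreover have "1 \<in> ?W" unfolding mem_Collect_eq using zero_le_one assms(2) \<tau>\<^sub>0 trivial by blast
  ultimately show ?thesis unfolding activity_weight_def by (intro cInf_greatest) blast+
qed

end
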